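(* Let $q$ be a prime power, $a\in\mathbb{F}_q^*$, $n\ge 0$ an integer, and let $y\in\mathbb{F}_{q^2}$ with $y\neq 0$, $y^2\neq a$ and $2y\neq a$. Put $x=y(a-y)$. Then $$F_n(a,x)=\frac{a}{2y-a}\bigl(y^n-(a-y)^n\bigr).$$
   Context: For an integer $n\ge 1$, the $n$-th reversed Dickson polynomial of the third kind is $F_n(a,x)=\sum_{i=0}^{\lfloor n/2\rfloor}\frac{n-2i}{n-i}\binom{n-i}{i}(-x)^i a^{n-2i}$, where each coefficient $\frac{n-2i}{n-i}\binom{n-i}{i}$ is an integer (read in the field), and $F_0(a,x)=0$. *)

theory Defs
  imports "HOL-Computational_Algebra.Primes"
begin

text \<open>Integer coefficient (n-2i)/(n-i) * binom(n-i,i), computed exactly in nat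
  (the division is exact for 0 <= i <= n div 2, n >= 1).\<close>
definition rd3_coeff :: "nat \<Rightarrow> nat \<Rightarrow> nat" where
  "rd3_coeff n i = ((n - 2*i) * ((n - i) choose i)) div (n - i)"

definition rev_dickson3 :: "nat \<Rightarrow> 'a::field \<Rightarrow> 'a \<Rightarrow> 'a" where
  "rev_dickson3 n a x =
     (if n = 0 then 0
      else (\<Sum>i = 0..n div 2. of_nat (rd3_coeff n i) * (- x) ^ i * a ^ (n - 2*i)))"

end

theory Submission
  imports Defs
begin

text \<open>For \<open>n \<ge> 1\<close> the coefficients of \<open>F_n\<close> are \<open>a\<close> times those of the reversed
  Dickson polynomial of the second kind \<open>E_(n-1)(a, x) = \<Sum>_i C(n-1-i, i) (-x)^i a^(n-1-2i)\<close>.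
  Pascal's rule gives \<open>E_(m+2) = a E_(m+1) - x E_m\<close>, which for \<open>a = y + z\<close>, \<open>x = y z\<close> is the
  recurrence satisfied by \<open>(y^(m+1) - z^(m+1)) / (y - z)\<close>. Taking \<open>z = a - y\<close> gives the formula;
  of the hypotheses only \<open>2 y \<noteq> a\<close> is needed, and the identity holds in every field.\<close>

lemma rd3_coeff_eq_choose:
  assumes "1 \<le> n" and "2 * i \<le> n"
  shows "rd3_coeff n i = (n - 1 - i) choose i"
proof -
  have "(n - 2 * i) * ((n - i) choose i) = (n - i) * ((n - 1 - i) choose i)"
    using binomial_absorb_comp[of "n - i" i] assms by (simp add: diff_diff_add mult_2)
  then show ?thesis
    unfolding rd3_coeff_def using assms by simp
qed

definition dickson2_term :: "nat \<Rightarrow> 'a::comm_ring_1 \<Rightarrow> 'a \<Rightarrow> nat \<Rightarrow> 'a" where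
  "dickson2_term n a x i = of_nat ((n - i) choose i) * (- x) ^ i * a ^ (n - 2 * i)"

text \<open>The terms with \<open>n div 2 < i \<le> n\<close> vanish, so summing up to \<open>n\<close> is harmless.\<close>
definition rev_dickson2 :: "nat \<Rightarrow> 'a::comm_ring_1 \<Rightarrow> 'a \<Rightarrow> 'a" where
  "rev_dickson2 n a x = (\<Sum>i\<le>n. dickson2_term n a x i)"

lemma dickson2_term_eq_0: "n < 2 * i \<Longrightarrow> dickson2_term n a x i = 0"
  unfolding dickson2_term_def by (simp add: binomial_eq_0)

lemma dickson2_term_Suc_Suc:
  "dickson2_term (Suc (Suc n)) a x (Suc i) =
     a * dickson2_term (Suc n) a x (Suc i) - x * dickson2_term n a x i"
proof (cases "i \<le> n")
  case True
  then have pascal: "(Suc n - i) choose Suc i = ((n - i) choose Suc i) + ((n - i) choose i)"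
    by (simp add: Suc_diff_le)
  show ?thesis
  proof (cases "2 * i < n")
    case True
    then have "n - 2 * i = Suc (n - Suc (2 * i))" by simp
    then have "a ^ (n - 2 * i) = a * a ^ (n - Suc (2 * i))" by simp
    then show ?thesis
      by (simp add: dickson2_term_def pascal algebra_simps)
  next
    case False
    then have zero: "(n - i) choose Suc i = 0" by (simp add: binomial_eq_0)
    show ?thesis
      by (simp add: dickson2_term_def pascal zero)
  qed
next
  case False
  then show ?thesis by (simp add: dickson2_term_eq_0)
qed

lemma rev_dickson2_Suc_Suc:
  "rev_dickson2 (Suc (Suc n)) a x = a * rev_dickson2 (Suc n) a x - x * rev_dickson2 n a x"
proof -
  have drop_last: "(\<Sum>i\<le>Suc n. dickson2_term n a x i) = rev_dickson2 n a x"
    "(\<Sum>i\<le>Suc n. dickson2_term (Suc n) a x (Suc i)) = (\<Sum>i\<le>n. dickson2_term (Suc n) a x (Suc i))"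
    by (simp_all add: rev_dickson2_def dickson2_term_eq_0)
  have "rev_dickson2 (Suc (Suc n)) a x =
      a ^ Suc (Suc n) + (\<Sum>i\<le>Suc n. dickson2_term (Suc (Suc n)) a x (Suc i))"
    unfolding rev_dickson2_def sum.atMost_Suc_shift[of _ "Suc n"] by (simp add: dickson2_term_def)
  also have "(\<Sum>i\<le>Suc n. dickson2_term (Suc (Suc n)) a x (Suc i)) =
      a * (\<Sum>i\<le>Suc n. dickson2_term (Suc n) a x (Suc i)) - x * (\<Sum>i\<le>Suc n. dickson2_term n a x i)"
    by (simp only: dickson2_term_Suc_Suc sum_subtractf sum_distrib_left)
  also have "a ^ Suc (Suc n) + \<dots> =
      a * (a ^ Suc n + (\<Sum>i\<le>n. dickson2_term (Suc n) a x (Suc i))) - x * rev_dickson2 n a x"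
    unfolding drop_last by (simp add: algebra_simps)
  also have "a ^ Suc n + (\<Sum>i\<le>n. dickson2_term (Suc n) a x (Suc i)) = rev_dickson2 (Suc n) a x"
    unfolding rev_dickson2_def sum.atMost_Suc_shift[of _ n] by (simp add: dickson2_term_def)
  finally show ?thesis .
qed

lemma rev_dickson2_closed_form:
  fixes y z :: "'a::comm_ring_1"
  shows "(y - z) * rev_dickson2 n (y + z) (y * z) = y ^ Suc n - z ^ Suc n"
proof (induction n rule: induct_nat_012)
  case (ge2 n)
  then show ?case
    by (simp only: rev_dickson2_Suc_Suc right_diff_distrib mult.left_commute[of "y - z"])
       (simp add: algebra_simps)
qed (simp_all add: rev_dickson2_def dickson2_term_def algebra_simps power2_eq_square)

lemma rev_dickson3_Suc:
  fixes a x :: "'a::field"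
  shows "rev_dickson3 (Suc n) a x = a * rev_dickson2 n a x"
proof -
  have "rev_dickson3 (Suc n) a x = (\<Sum>i = 0..Suc n div 2. a * dickson2_term n a x i)"
    unfolding rev_dickson3_def
  proof (simp, intro sum.cong refl)
    fix i assume "i \<in> {0..Suc n div 2}"
    then have "2 * i \<le> Suc n" by auto
    then consider "2 * i \<le> n" | "2 * i = Suc n" by linarith
    then show "of_nat (rd3_coeff (Suc n) i) * (- x) ^ i * a ^ (Suc n - 2 * i) =
        a * dickson2_term n a x i"
    proof cases
      case 1
      then have "Suc n - 2 * i = Suc (n - 2 * i)" by simp
      then show ?thesis
        using 1 by (simp add: rd3_coeff_eq_choose dickson2_term_def mult_ac)
    next
      case 2
      then show ?thesis
        by (simp add: rd3_coeff_eq_choose dickson2_term_def binomial_eq_0)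
    qed
  qed
  also have "\<dots> = a * rev_dickson2 n a x"
    unfolding rev_dickson2_def sum_distrib_left
    by (rule sum.mono_neutral_left) (auto simp: dickson2_term_eq_0)
  finally show ?thesis .
qed

theorem lemma2p2:
  fixes a y :: "'a::{field,finite}" and q p k n :: nat
  assumes "prime p" and "k \<ge> 1" and "q = p ^ k"
    and "card (UNIV :: 'a set) = q ^ 2"
    and "a ^ q = a" and "a \<noteq> 0"
    and "y \<noteq> 0" and "y ^ 2 \<noteq> a" and "2 * y \<noteq> a"
  shows "rev_dickson3 n a (y * (a - y)) = a / (2 * y - a) * (y ^ n - (a - y) ^ n)"
proof (cases n)
  case 0
  then show ?thesis by (simp add: rev_dickson3_def)
next
  case (Suc m)
  have "y - (a - y) = 2 * y - a" "y + (a - y) = a"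
    by (simp_all add: algebra_simps)
  then have "(2 * y - a) * rev_dickson2 m a (y * (a - y)) = y ^ n - (a - y) ^ n"
    using rev_dickson2_closed_form[of y "a - y" m] Suc by simp
  moreover have "2 * y - a \<noteq> 0"
    using \<open>2 * y \<noteq> a\<close> by simp
  ultimately have "rev_dickson2 m a (y * (a - y)) = (y ^ n - (a - y) ^ n) / (2 * y - a)"
    by (metis nonzero_mult_div_cancel_left)
  then show ?thesis
    using Suc by (simp add: rev_dickson3_Suc times_divide_eq_left)
qed

end
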